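(* Let $d\ge1$, $\lambda>0$, $\delta>0$, and let $f:\mathbb{R}^d\to\mathbb{R}$ satisfy: (A1) $f$ is continuous and has at least one minimizer; (A2) $\int_{\mathbb{R}^d}\exp(-f(y)/\delta)\,dy<+\infty$. Let $(x^k)_{k\in\mathbb{N}}$ be generated by ZOPPA. Then (i) $H_{\lambda,\delta}(x^{k+1})\le H_{\lambda,\delta}(x^k)-\frac1{2\lambda\delta}\|x^{k+1}-x^k\|^2$ for all $k\ge0$, and (ii) $\|x^{k+1}-x^k\|\to0$ as $k\to\infty$.
   Context: The zeroth-order proximal operator is $T:=\operatorname{zprox}^\delta_{\lambda,f}$, $T(x)=\dfrac{\mathbb{E}_{y\sim\mathcal N(x,\lambda\delta I)}[y\exp(-f(y)/\delta)]}{\mathbb{E}_{y\sim\mathcal N(x,\lambda\delta I)}[\exp(-f(y)/\delta)]}$; under (A1)–(A2) it is a bijection of $\mathbb{R}^d$. The soft Moreau envelope is $f^{\lambda,\delta}(x)=-\delta\log\mathbb{E}_{y\sim\mathcal N(x,\lambda\delta I)}[\exp(-f(y)/\delta)]$. The function $H_{\lambda,\delta}:\mathbb{R}^d\to\mathbb{R}$ is $H_{\lambda,\delta}(x)=-\frac{1}{2\lambda\delta}\|T^{-1}(x)-x\|^2+\frac1\delta f^{\lambda,\delta}(T^{-1}(x))$. ZOPPA: given $x^0\in\mathbb{R}^d$, iterate $x^{k+1}=T(x^k)$. *)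

theory Defs
  imports "HOL-Analysis.Analysis"
begin

definition gauss_density :: "real \<Rightarrow> real \<Rightarrow> 'a::euclidean_space \<Rightarrow> 'a \<Rightarrow> real" where
  "gauss_density lam del x y =
     (2 * pi * lam * del) powr (- real DIM('a) / 2) * exp (- (norm (y - x))\<^sup>2 / (2 * lam * del))"

definition zprox :: "real \<Rightarrow> real \<Rightarrow> ('a::euclidean_space \<Rightarrow> real) \<Rightarrow> 'a \<Rightarrow> 'a" where
  "zprox lam del f x =
     (\<integral>y. (gauss_density lam del x y * exp (- f y / del)) *\<^sub>R y \<partial>lborel) /\<^sub>R
     (\<integral>y. gauss_density lam del x y * exp (- f y / del) \<partial>lborel)"

definition soft_moreau :: "real \<Rightarrow> real \<Rightarrow> ('a::euclidean_space \<Rightarrow> real) \<Rightarrow> 'a \<Rightarrow> real" where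
  "soft_moreau lam del f x =
     - del * ln (\<integral>y. gauss_density lam del x y * exp (- f y / del) \<partial>lborel)"

text \<open>The Lyapunov function H_{lam,del}; T^{-1} is the inverse of the bijection zprox.\<close>
definition H_fun :: "real \<Rightarrow> real \<Rightarrow> ('a::euclidean_space \<Rightarrow> real) \<Rightarrow> 'a \<Rightarrow> real" where
  "H_fun lam del f x =
     (let z = inv (zprox lam del f) x in
      - (1 / (2 * lam * del)) * (norm (z - x))\<^sup>2 + (1 / del) * soft_moreau lam del f z)"

end

theory Submission
  imports Defs
begin

(* Write s = lam del, let Z w = exp (- f^{lam,del} w / del) be the Gaussian-smoothed partition
  function, and Psi x w = Z w exp (|w - x|^2 / (2 s)), so that H x = - ln (Psi x (T^{-1} x)).
  Up to a factor independent of w, Psi x is the Laplace transform of a positive integrable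
  density; hence it is log-convex with logarithmic gradient (T w - x) / s at w, and T z = x
  exactly when z minimises Psi x. As Psi x is continuous and grows exponentially, minimisers
  exist, so T is onto and H x = - ln (min Psi x). Evaluating Psi (T x) at the admissible point x
  gives H (T x) <= - ln (Z x) - |T x - x|^2 / (2 s) <= H x - |T x - x|^2 / (2 s). Since
  Z <= (2 pi s)^(-d/2) int exp (- f / del) by (A2), H is bounded below, so the squared steps
  are summable. *)

lemma exp_neg_le_quadratic:
  fixes t u :: real
  assumes "0 < t" "t \<le> 1"
  shows "exp (- (t * u)) \<le> 1 - t * u + t\<^sup>2 * (u\<^sup>2 * exp \<bar>u\<bar>)"
proof -
  obtain \<xi> where \<xi>: "\<bar>\<xi>\<bar> \<le> \<bar>- (t * u)\<bar>"
    "exp (- (t * u)) = (\<Sum>m<2. (- (t * u)) ^ m / fact m) + exp \<xi> / fact 2 * (- (t * u)) ^ 2"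
    using Maclaurin_exp_le[of "- (t * u)" 2] by blast
  have "\<bar>- (t * u)\<bar> \<le> \<bar>u\<bar>"
    using assms by (simp add: abs_mult mult_left_le_one_le)
  then have "exp \<xi> \<le> exp \<bar>u\<bar>"
    using \<xi>(1) by simp
  then have "exp \<xi> / 2 \<le> exp \<bar>u\<bar>"
    using exp_gt_zero[of \<xi>] by linarith
  then have "exp \<xi> / 2 * (t\<^sup>2 * u\<^sup>2) \<le> exp \<bar>u\<bar> * (t\<^sup>2 * u\<^sup>2)"
    by (rule mult_right_mono) simp
  then have "exp \<xi> / 2 * (t\<^sup>2 * u\<^sup>2) \<le> t\<^sup>2 * (u\<^sup>2 * exp \<bar>u\<bar>)"
    by (simp add: mult_ac)
  moreover have "exp (- (t * u)) = 1 - t * u + exp \<xi> / 2 * (t\<^sup>2 * u\<^sup>2)"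
    using \<xi>(2) by (simp add: eval_nat_numeral power2_eq_square)
  ultimately show ?thesis by linarith
qed

lemma power2_mult_exp_abs_le: "u\<^sup>2 * exp \<bar>u\<bar> \<le> 2 * (exp (2 * u) + exp (- (2 * u)))"
  for u :: real
proof -
  have "u\<^sup>2 \<le> 2 * exp \<bar>u\<bar>"
    using exp_lower_Taylor_quadratic[of "\<bar>u\<bar>"] by simp
  then have "u\<^sup>2 * exp \<bar>u\<bar> \<le> 2 * exp \<bar>u\<bar> * exp \<bar>u\<bar>"
    by (intro mult_right_mono) auto
  also have "\<dots> = 2 * exp (2 * \<bar>u\<bar>)"
    by (simp add: exp_add[symmetric])
  also have "\<dots> \<le> 2 * (exp (2 * u) + exp (- (2 * u)))"
    by (cases "u \<ge> 0") auto
  finally show ?thesis .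
qed

lemma gaussian_mult_exp_le:
  fixes r c s :: real
  assumes "s > 0"
  shows "exp (- r\<^sup>2 / (2 * s)) * exp (c * r) \<le> exp (c\<^sup>2 * s / 2)"
proof -
  have "c\<^sup>2 * s / 2 - (- r\<^sup>2 / (2 * s) + c * r) = (r - c * s)\<^sup>2 / (2 * s)"
    using assms by (simp add: field_simps power2_eq_square)
  also have "\<dots> \<ge> 0"
    using assms by simp
  finally show ?thesis
    by (simp add: exp_add[symmetric])
qed

lemma quadratic_below_linear:
  fixes A B :: real
  assumes "A > 0" "B \<ge> 0"
  obtains t where "0 < t" "t \<le> 1" "t\<^sup>2 * B < t * A"
proof
  define t where "t = min 1 (A / (2 * B + 1))"
  show "0 < t" "t \<le> 1"
    using assms by (auto simp: t_def)
  have "t * B \<le> A / (2 * B + 1) * B"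
    using assms by (intro mult_right_mono) (auto simp: t_def)
  also have "\<dots> < A"
    using assms by (simp add: field_simps add_pos_nonneg)
  finally show "t\<^sup>2 * B < t * A"
    using \<open>0 < t\<close> by (simp add: power2_eq_square)
qed

lemma integral_pos_lborel:
  fixes h :: "'a::euclidean_space \<Rightarrow> real"
  assumes "integrable lborel h" and "\<And>y. h y > 0"
  shows "integral\<^sup>L lborel h > 0"
proof -
  have "integral\<^sup>L lborel h \<noteq> 0"
  proof
    assume "integral\<^sup>L lborel h = 0"
    then have "AE y in lborel. h y = 0"
      using integral_nonneg_eq_0_iff_AE[OF assms(1)] assms(2) less_imp_le by auto
    then have "AE (y::'a) in lborel. False"
      by (rule eventually_mono) (use assms(2) in \<open>metis less_irrefl\<close>)
    then show False
      using ae_filter_eq_bot_iff[of "lborel :: 'a measure"] by (simp add: eventually_False)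
  qed
  moreover have "integral\<^sup>L lborel h \<ge> 0"
    using assms(2) by (intro integral_nonneg_AE) (simp add: less_imp_le)
  ultimately show ?thesis
    by simp
qed

lemma inner_ge_half_norm_on_ball:
  fixes w x y :: "'a::real_inner"
  assumes "w \<noteq> 0" and "y \<in> ball (x + w /\<^sub>R norm w) (1/2)"
  shows "norm w / 2 \<le> w \<bullet> (y - x)" and "y \<in> cball x 2"
proof -
  define e where "e = y - x - w /\<^sub>R norm w"
  have "norm e < 1/2"
    using assms(2) by (simp add: e_def dist_norm norm_minus_commute algebra_simps)
  have "w \<bullet> (y - x) = norm w + w \<bullet> e"
    using assms(1) by (simp add: e_def inner_diff_right power2_norm_eq_inner[symmetric] power2_eq_square)
  moreover have "\<bar>w \<bullet> e\<bar> \<le> norm w * (1/2)"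
    using Cauchy_Schwarz_ineq2[of w e] \<open>norm e < 1/2\<close> mult_left_mono[of "norm e" "1/2" "norm w"]
    by simp
  ultimately show "norm w / 2 \<le> w \<bullet> (y - x)"
    by linarith
  have "norm (y - x) \<le> 1 + norm e"
    using norm_triangle_ineq[of "w /\<^sub>R norm w" e] assms(1) by (simp add: e_def)
  then show "y \<in> cball x 2"
    using \<open>norm e < 1/2\<close> by (simp add: dist_norm norm_minus_commute)
qed

lemma continuous_attains_inf_coercive:
  fixes g :: "'a::euclidean_space \<Rightarrow> real"
  assumes "continuous_on UNIV g" and "\<And>w. R < norm w \<Longrightarrow> g a \<le> g w"
  obtains z where "\<And>w. g z \<le> g w"
proof -
  define R' where "R' = max R (norm a)"
  obtain z where z: "\<And>w. w \<in> cball 0 R' \<Longrightarrow> g z \<le> g w"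
    using continuous_attains_inf[OF compact_cball _ continuous_on_subset[OF assms(1)], of 0 R']
    by (fastforce simp: R'_def)
  have a: "a \<in> cball 0 R'"
    by (simp add: R'_def)
  have "g z \<le> g w" for w
  proof (cases "w \<in> cball 0 R'")
    case False
    then have "g a \<le> g w"
      by (intro assms(2)) (simp add: R'_def)
    then show ?thesis
      using z[OF a] by linarith
  qed (rule z)
  then show ?thesis
    using that by blast
qed

lemma sufficient_decrease_tendsto_zero:
  fixes H d :: "nat \<Rightarrow> real"
  assumes "c > 0" and decrease: "\<And>k. H (Suc k) \<le> H k - c * (d k)\<^sup>2"
    and bounded: "\<And>k. L \<le> H k"
  shows "d \<longlonglongrightarrow> 0"
proof -
  have partial_sums: "(\<Sum>k<n. c * (d k)\<^sup>2) \<le> H 0 - H n" for n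
    using decrease by (induction n) (auto simp: add.commute, smt (verit))
  have "summable (\<lambda>k. c * (d k)\<^sup>2)"
  proof (rule summableI_nonneg_bounded)
    show "(\<Sum>k<n. c * (d k)\<^sup>2) \<le> H 0 - L" for n
      using partial_sums[of n] bounded[of n] by linarith
  qed (use \<open>c > 0\<close> in simp)
  then have "(\<lambda>k. (1 / c) * (c * (d k)\<^sup>2)) \<longlonglongrightarrow> (1 / c) * 0"
    by (intro tendsto_mult tendsto_const summable_LIMSEQ_zero)
  then have "(\<lambda>k. sqrt ((d k)\<^sup>2)) \<longlonglongrightarrow> sqrt 0"
    using \<open>c > 0\<close> by (intro tendsto_real_sqrt) simp
  then show ?thesis
    by (simp add: tendsto_rabs_zero_iff)
qed

locale zprox_setting =
  fixes f :: "'a::euclidean_space \<Rightarrow> real" and lam del :: real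
  assumes lam_pos: "lam > 0" and del_pos: "del > 0"
    and f_continuous: "continuous_on UNIV f"
    and exp_neg_f_finite: "(\<integral>\<^sup>+ y. ennreal (exp (- f y / del)) \<partial>lborel) < \<infinity>"
begin

definition "s = lam * del"
definition "K = (2 * pi * lam * del) powr (- real DIM('a) / 2)"
definition "gibbs z y = gauss_density lam del z y * exp (- f y / del)"
definition "Z z = integral\<^sup>L lborel (gibbs z)"

lemma s_pos: "s > 0"
  using lam_pos del_pos by (simp add: s_def)

lemma K_pos: "K > 0"
  using lam_pos del_pos by (simp add: K_def)

lemma gauss_density_eq: "gauss_density lam del z y = K * exp (- (norm (y - z))\<^sup>2 / (2 * s))"
  for z y :: 'a
  by (simp add: gauss_density_def K_def s_def mult.assoc)

lemma gauss_density_nonneg: "gauss_density lam del z y \<ge> 0"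
  for z y :: 'a
  using K_pos by (simp add: gauss_density_eq)

lemma gauss_density_le: "gauss_density lam del z y \<le> K"
  for z y :: 'a
  using K_pos s_pos by (simp add: gauss_density_eq)

lemma gauss_density_mult_norm_le:
  "gauss_density lam del z y * norm y \<le> K * (exp (s / 2) + norm z)" for z y :: 'a
proof -
  define r where "r = norm (y - z)"
  have "norm y \<le> r + norm z"
    unfolding r_def by (metis diff_add_cancel norm_triangle_ineq)
  also have "r \<le> exp r"
    by (meson exp_ge_add_one_self order_trans le_add_same_cancel2 zero_le_one)
  finally have "gauss_density lam del z y * norm y \<le> K * exp (- r\<^sup>2 / (2 * s)) * (exp r + norm z)"
    using K_pos unfolding gauss_density_eq r_def[symmetric] by (simp add: add.commute)
  also have "\<dots> = K * (exp (- r\<^sup>2 / (2 * s)) * exp (1 * r) + exp (- r\<^sup>2 / (2 * s)) * norm z)"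
    by (simp add: algebra_simps)
  also have "\<dots> \<le> K * (exp (1\<^sup>2 * s / 2) + 1 * norm z)"
    using K_pos s_pos gaussian_mult_exp_le[OF s_pos, of r 1]
    by (intro mult_left_mono add_mono mult_right_mono) auto
  finally show ?thesis
    by simp
qed

lemma f_measurable [measurable]: "f \<in> borel_measurable lborel"
  using borel_measurable_continuous_onI[OF f_continuous] by simp

lemma gauss_density_measurable [measurable]:
  "(\<lambda>y. gauss_density lam del z y) \<in> borel_measurable lborel" for z :: 'a
  unfolding gauss_density_eq by measurable

lemma integrable_exp_neg_f: "integrable lborel (\<lambda>y. exp (- f y / del))"
  by (rule integrableI_bounded) (use exp_neg_f_finite in auto)

lemma integrable_exp_neg_f_scaleR:
  fixes h :: "'a \<Rightarrow> 'b::{banach, second_countable_topology}"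
  assumes "h \<in> borel_measurable lborel" and "\<And>y. norm (h y) \<le> C"
  shows "integrable lborel (\<lambda>y. exp (- f y / del) *\<^sub>R h y)"
proof (rule Bochner_Integration.integrable_bound[OF integrable_mult_right[OF integrable_exp_neg_f]])
  show "(\<lambda>y. exp (- f y / del) *\<^sub>R h y) \<in> borel_measurable lborel"
    using assms(1) by measurable
  show "AE y in lborel. norm (exp (- f y / del) *\<^sub>R h y) \<le> norm (C * exp (- f y / del))"
    using assms(2) order_trans[OF norm_ge_zero assms(2)]
    by (intro AE_I2) (simp add: abs_of_nonneg mult_right_mono mult.commute)
qed

lemma integrable_gibbs: "integrable lborel (gibbs z)"
  using integrable_exp_neg_f_scaleR[of "gauss_density lam del z" K]
    gauss_density_nonneg gauss_density_le
  unfolding gibbs_def[abs_def] by (simp add: mult.commute)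

lemma integrable_gibbs_scaleR: "integrable lborel (\<lambda>y. gibbs z y *\<^sub>R y)"
  using integrable_exp_neg_f_scaleR[of "\<lambda>y. gauss_density lam del z y *\<^sub>R y" "K * (exp (s / 2) + norm z)"]
    gauss_density_nonneg gauss_density_mult_norm_le
  unfolding gibbs_def by (simp add: mult.commute)

lemma gibbs_pos: "gibbs z y > 0"
  using K_pos by (simp add: gibbs_def gauss_density_eq)

lemma Z_pos: "Z z > 0"
  unfolding Z_def using integrable_gibbs gibbs_pos by (rule integral_pos_lborel)

lemma Z_le: "Z z \<le> K * integral\<^sup>L lborel (\<lambda>y. exp (- f y / del))"
proof -
  have "Z z \<le> integral\<^sup>L lborel (\<lambda>y. K * exp (- f y / del))"
    unfolding Z_def using integrable_gibbs integrable_exp_neg_f gauss_density_le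
    by (intro integral_mono) (auto simp: gibbs_def intro: mult_right_mono)
  then show ?thesis
    by simp
qed

lemma integral_gibbs_inner: "(\<integral>y. gibbs z y * (y \<bullet> a) \<partial>lborel) = Z z * (zprox lam del f z \<bullet> a)"
proof -
  have "(\<integral>y. gibbs z y * (y \<bullet> a) \<partial>lborel) = (\<integral>y. (gibbs z y *\<^sub>R y) \<bullet> a \<partial>lborel)"
    by simp
  also have "\<dots> = (\<integral>y. gibbs z y *\<^sub>R y \<partial>lborel) \<bullet> a"
    using integrable_gibbs_scaleR by (rule integral_inner_left)
  also have "(\<integral>y. gibbs z y *\<^sub>R y \<partial>lborel) = Z z *\<^sub>R zprox lam del f z"
    using Z_pos[of z] by (simp add: zprox_def Z_def gibbs_def[abs_def])
  finally show ?thesis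
    by simp
qed

definition "psi_density x w y = gibbs w y * exp ((norm (w - x))\<^sup>2 / (2 * s))"
definition "Psi x w = Z w * exp ((norm (w - x))\<^sup>2 / (2 * s))"

lemma psi_density_pos: "psi_density x w y > 0"
  using gibbs_pos by (simp add: psi_density_def)

lemma integrable_psi_density: "integrable lborel (psi_density x w)"
  unfolding psi_density_def[abs_def] using integrable_gibbs by simp

lemma Psi_eq_integral: "Psi x w = integral\<^sup>L lborel (psi_density x w)"
  by (simp add: Psi_def psi_density_def[abs_def] Z_def)

lemma psi_density_eq_exp_inner: "psi_density x w y = psi_density x 0 y * exp (w \<bullet> (y - x) / s)"
proof -
  have psi_density_exp: "psi_density x v y
      = K * exp (- f y / del) * exp (- (norm (y - v))\<^sup>2 / (2 * s) + (norm (v - x))\<^sup>2 / (2 * s))" for v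
    unfolding psi_density_def gibbs_def gauss_density_eq exp_add by (simp only: mult_ac)
  have "- (norm (y - w))\<^sup>2 / (2 * s) + (norm (w - x))\<^sup>2 / (2 * s)
      = (- (norm y)\<^sup>2 / (2 * s) + (norm x)\<^sup>2 / (2 * s)) + w \<bullet> (y - x) / s"
    using s_pos by (simp add: power2_norm_eq_inner inner_diff_left inner_diff_right
        inner_commute field_simps)
  then show ?thesis
    unfolding psi_density_exp by (simp add: exp_add mult_ac)
qed

lemma psi_density_shift: "psi_density x w y = psi_density x z y * exp ((w - z) \<bullet> (y - x) / s)"
  by (subst (1 2) psi_density_eq_exp_inner)
    (simp add: inner_diff_left diff_divide_distrib exp_diff)

lemma psi_density_measurable [measurable]: "psi_density x w \<in> borel_measurable lborel"
  using integrable_psi_density by (rule borel_measurable_integrable)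

lemma integrable_gibbs_inner: "integrable lborel (\<lambda>y. gibbs z y * (y \<bullet> a))"
  using integrable_inner_left[OF integrable_gibbs_scaleR, of z a] by simp

lemma psi_density_mult_inner:
  "psi_density x z y * (a \<bullet> (y - x))
     = exp ((norm (z - x))\<^sup>2 / (2 * s)) * (gibbs z y * (y \<bullet> a) - (x \<bullet> a) * gibbs z y)"
  by (simp add: psi_density_def inner_diff_right inner_commute algebra_simps)

lemma integrable_psi_density_inner: "integrable lborel (\<lambda>y. psi_density x z y * (a \<bullet> (y - x)))"
  unfolding psi_density_mult_inner using integrable_gibbs_inner integrable_gibbs by simp

lemma integral_psi_density_inner:
  "(\<integral>y. psi_density x z y * (a \<bullet> (y - x)) \<partial>lborel) = Psi x z * (a \<bullet> (zprox lam del f z - x))"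
proof -
  have "(\<integral>y. psi_density x z y * (a \<bullet> (y - x)) \<partial>lborel)
      = exp ((norm (z - x))\<^sup>2 / (2 * s)) * ((\<integral>y. gibbs z y * (y \<bullet> a) \<partial>lborel) - (x \<bullet> a) * Z z)"
    unfolding psi_density_mult_inner Z_def using integrable_gibbs_inner integrable_gibbs by simp
  also have "\<dots> = Psi x z * (a \<bullet> (zprox lam del f z - x))"
    unfolding integral_gibbs_inner Psi_def by (simp add: inner_diff_right inner_commute algebra_simps)
  finally show ?thesis .
qed

text \<open>Jensen's inequality for \<open>exp\<close>, via its tangent line at the mean \<open>c\<close>; it says that
  \<open>(zprox z - x) / s\<close> is the gradient of \<open>ln (Psi x)\<close> at \<open>z\<close>.\<close>

lemma Psi_ge_tangent: "Psi x z * exp ((w - z) \<bullet> (zprox lam del f z - x) / s) \<le> Psi x w"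
proof -
  define c where "c = (w - z) \<bullet> (zprox lam del f z - x) / s"
  define u where "u y = (w - z) \<bullet> (y - x) / s" for y
  have tangent: "psi_density x z y * exp c * (1 + u y - c) \<le> psi_density x w y" for y
  proof -
    have "exp c * (1 + u y - c) \<le> exp c * exp (u y - c)"
      using exp_ge_add_one_self[of "u y - c"] by (intro mult_left_mono) (auto simp: add_diff_eq)
    then have "psi_density x z y * (exp c * (1 + u y - c)) \<le> psi_density x z y * exp (u y)"
      using psi_density_pos[of x z y] by (simp add: exp_diff)
    then show ?thesis
      by (simp add: psi_density_shift[of x w y z] u_def mult.assoc)
  qed
  have linear: "psi_density x z y * exp c * (1 + u y - c)
      = exp c * (1 - c) * psi_density x z y + exp c / s * (psi_density x z y * ((w - z) \<bullet> (y - x)))" for y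
    using s_pos by (simp add: u_def field_simps)
  have "(\<integral>y. psi_density x z y * exp c * (1 + u y - c) \<partial>lborel)
      = exp c * (1 - c) * Psi x z + exp c / s * (Psi x z * ((w - z) \<bullet> (zprox lam del f z - x)))"
    unfolding linear using integrable_psi_density integrable_psi_density_inner
    by (simp add: integral_psi_density_inner Psi_eq_integral)
  also have "\<dots> = Psi x z * exp c"
    using s_pos by (simp add: c_def field_simps)
  finally have "Psi x z * exp c = (\<integral>y. psi_density x z y * exp c * (1 + u y - c) \<partial>lborel)" ..
  also have "\<dots> \<le> Psi x w"
    unfolding Psi_eq_integral linear[symmetric]
    using integrable_psi_density integrable_psi_density_inner tangent
    by (intro integral_mono) (auto simp: linear)
  finally show ?thesis
    unfolding c_def .
qed

lemma Psi_le_second_order: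
  obtains B where "B \<ge> 0" and "\<And>t. 0 < t \<Longrightarrow> t \<le> 1 \<Longrightarrow>
    Psi x (z - t *\<^sub>R v) \<le> Psi x z - t * (Psi x z * (v \<bullet> (zprox lam del f z - x)) / s) + t\<^sup>2 * B"
proof -
  define F where "F = psi_density x z"
  define u where "u y = v \<bullet> (y - x) / s" for y
  define g where "g y = F y * ((u y)\<^sup>2 * exp \<bar>u y\<bar>)" for y
  have shift: "psi_density x (z + r *\<^sub>R v) y = F y * exp (r * u y)" for r y
    unfolding F_def u_def by (subst psi_density_shift[of _ _ _ z]) simp
  have "integrable lborel g"
  proof (rule Bochner_Integration.integrable_bound)
    show "integrable lborel (\<lambda>y. 2 * (psi_density x (z + 2 *\<^sub>R v) y + psi_density x (z + (- 2) *\<^sub>R v) y))"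
      using integrable_psi_density by simp
    show "g \<in> borel_measurable lborel"
      unfolding g_def F_def u_def by measurable
    show "AE y in lborel. norm (g y)
        \<le> norm (2 * (psi_density x (z + 2 *\<^sub>R v) y + psi_density x (z + (- 2) *\<^sub>R v) y))"
    proof (intro AE_I2)
      fix y
      have "F y * ((u y)\<^sup>2 * exp \<bar>u y\<bar>) \<le> F y * (2 * (exp (2 * u y) + exp (- (2 * u y))))"
        using psi_density_pos[of x z y, THEN less_imp_le] power2_mult_exp_abs_le
        by (intro mult_left_mono) (auto simp: F_def)
      then show "norm (g y) \<le> norm (2 * (psi_density x (z + 2 *\<^sub>R v) y + psi_density x (z + (- 2) *\<^sub>R v) y))"
        using psi_density_pos[of x z y] unfolding shift g_def
        by (simp add: F_def algebra_simps)
    qed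
  qed
  show ?thesis
  proof
    show "integral\<^sup>L lborel g \<ge> 0"
      using psi_density_pos by (intro integral_nonneg_AE) (simp add: g_def F_def less_imp_le)
    fix t :: real
    assume t: "0 < t" "t \<le> 1"
    have pointwise: "psi_density x (z - t *\<^sub>R v) y \<le> F y - t * (F y * u y) + t\<^sup>2 * g y" for y
    proof -
      have "F y * exp (- t * u y) \<le> F y * (1 - t * u y + t\<^sup>2 * ((u y)\<^sup>2 * exp \<bar>u y\<bar>))"
        using exp_neg_le_quadratic[OF t, of "u y"] psi_density_pos[of x z y]
        by (intro mult_left_mono) (auto simp: F_def)
      then show ?thesis
        using shift[of "- t" y] by (simp add: g_def algebra_simps)
    qed
    have Fu: "F y * u y = psi_density x z y * (v \<bullet> (y - x)) / s" for y
      by (simp add: F_def u_def)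
    have integrable_Fu: "integrable lborel (\<lambda>y. F y * u y)"
      unfolding Fu using integrable_psi_density_inner by simp
    have "Psi x (z - t *\<^sub>R v) \<le> (\<integral>y. F y - t * (F y * u y) + t\<^sup>2 * g y \<partial>lborel)"
      unfolding Psi_eq_integral using pointwise integrable_psi_density integrable_Fu
        \<open>integrable lborel g\<close>
      by (intro integral_mono) (auto simp: F_def)
    also have "\<dots> = integral\<^sup>L lborel F - t * (\<integral>y. F y * u y \<partial>lborel) + t\<^sup>2 * integral\<^sup>L lborel g"
      using integrable_psi_density integrable_Fu \<open>integrable lborel g\<close> by (simp add: F_def)
    also have "\<dots> = Psi x z - t * (Psi x z * (v \<bullet> (zprox lam del f z - x)) / s) + t\<^sup>2 * integral\<^sup>L lborel g"
      unfolding Fu by (simp add: F_def integral_psi_density_inner Psi_eq_integral)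
    finally show "Psi x (z - t *\<^sub>R v)
        \<le> Psi x z - t * (Psi x z * (v \<bullet> (zprox lam del f z - x)) / s) + t\<^sup>2 * integral\<^sup>L lborel g" .
  qed
qed

lemma zprox_eq_iff_minimizer: "zprox lam del f z = x \<longleftrightarrow> (\<forall>w. Psi x z \<le> Psi x w)"
proof
  assume "zprox lam del f z = x"
  then show "\<forall>w. Psi x z \<le> Psi x w"
    using Psi_ge_tangent[of x z] by simp
next
  assume minimizer: "\<forall>w. Psi x z \<le> Psi x w"
  show "zprox lam del f z = x"
  proof (rule ccontr)
    define v where "v = zprox lam del f z - x"
    assume "zprox lam del f z \<noteq> x"
    then have descent: "Psi x z * (v \<bullet> v) / s > 0"
      using Z_pos s_pos by (simp add: v_def Psi_def)
    obtain B where "B \<ge> 0" and B: "\<And>t. 0 < t \<Longrightarrow> t \<le> 1 \<Longrightarrow>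
        Psi x (z - t *\<^sub>R v) \<le> Psi x z - t * (Psi x z * (v \<bullet> v) / s) + t\<^sup>2 * B"
      using Psi_le_second_order[of x z v] by (auto simp: v_def)
    obtain t where "0 < t" "t \<le> 1" "t\<^sup>2 * B < t * (Psi x z * (v \<bullet> v) / s)"
      using quadratic_below_linear[OF descent \<open>B \<ge> 0\<close>] .
    then have "Psi x (z - t *\<^sub>R v) < Psi x z"
      using B by fastforce
    then show False
      using minimizer by (meson not_le)
  qed
qed

lemma Psi_pos: "Psi x w > 0"
  using Z_pos by (simp add: Psi_def)

lemma Psi_convex: "convex_on UNIV (Psi x)"
proof (rule convex_onI)
  fix t :: real and w1 w2 :: 'a
  assume t: "0 < t" "t < 1"
  have "psi_density x ((1 - t) *\<^sub>R w1 + t *\<^sub>R w2) y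
      \<le> (1 - t) * psi_density x w1 y + t * psi_density x w2 y" for y
  proof -
    have "exp ((1 - t) * (w1 \<bullet> (y - x) / s) + t * (w2 \<bullet> (y - x) / s))
        \<le> (1 - t) * exp (w1 \<bullet> (y - x) / s) + t * exp (w2 \<bullet> (y - x) / s)"
      using convex_onD[OF exp_convex, of t "w1 \<bullet> (y - x) / s" "w2 \<bullet> (y - x) / s"] t by simp
    then have "psi_density x 0 y * exp ((1 - t) * (w1 \<bullet> (y - x) / s) + t * (w2 \<bullet> (y - x) / s))
        \<le> psi_density x 0 y * ((1 - t) * exp (w1 \<bullet> (y - x) / s) + t * exp (w2 \<bullet> (y - x) / s))"
      using psi_density_pos[of x 0 y] by (intro mult_left_mono) auto
    moreover have "((1 - t) *\<^sub>R w1 + t *\<^sub>R w2) \<bullet> (y - x) / s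
        = (1 - t) * (w1 \<bullet> (y - x) / s) + t * (w2 \<bullet> (y - x) / s)"
      by (simp add: inner_add_left add_divide_distrib)
    ultimately show ?thesis
      by (subst (1 2 3) psi_density_eq_exp_inner) (simp add: algebra_simps)
  qed
  then have "Psi x ((1 - t) *\<^sub>R w1 + t *\<^sub>R w2)
      \<le> (\<integral>y. (1 - t) * psi_density x w1 y + t * psi_density x w2 y \<partial>lborel)"
    unfolding Psi_eq_integral using integrable_psi_density by (intro integral_mono) auto
  then show "Psi x ((1 - t) *\<^sub>R w1 + t *\<^sub>R w2) \<le> (1 - t) * Psi x w1 + t * Psi x w2"
    unfolding Psi_eq_integral using integrable_psi_density by simp
qed simp

lemma Psi_continuous: "continuous_on UNIV (Psi x)"
  using Psi_convex by (rule convex_on_continuous[OF open_UNIV])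

lemma psi_density_continuous: "continuous_on UNIV (psi_density x w)"
  unfolding psi_density_def[abs_def] gibbs_def gauss_density_eq
  using del_pos s_pos by (intro continuous_intros f_continuous) auto

lemma Psi_ge_exp_norm:
  obtains c where "c > 0" and "\<And>w. w \<noteq> 0 \<Longrightarrow> c * exp (norm w / (2 * s)) \<le> Psi x w"
proof -
  obtain y0 where "y0 \<in> cball x 2" and y0: "\<And>y. y \<in> cball x 2 \<Longrightarrow> psi_density x 0 y0 \<le> psi_density x 0 y"
    using continuous_attains_inf[OF compact_cball _ continuous_on_subset[OF psi_density_continuous]]
    by (metis cball_eq_empty empty_iff not_less subset_UNIV zero_le_numeral)
  define m where "m = psi_density x 0 y0"
  define V where "V = measure lborel (ball (0::'a) (1/2))"
  have "m > 0" "V > 0"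
    using psi_density_pos by (simp_all add: m_def V_def)
  have "m * V * exp (norm w / (2 * s)) \<le> Psi x w" if "w \<noteq> 0" for w
  proof -
    define B where "B = ball (x + w /\<^sub>R norm w) (1/2)"
    define C where "C = m * exp (norm w / (2 * s))"
    have in_B: "norm w / 2 \<le> w \<bullet> (y - x) \<and> y \<in> cball x 2" if "y \<in> B" for y
      using inner_ge_half_norm_on_ball[OF \<open>w \<noteq> 0\<close>] that by (simp add: B_def)
    have "C * indicator B y \<le> psi_density x w y" for y
    proof (cases "y \<in> B")
      case True
      then have "exp (norm w / (2 * s)) \<le> exp (w \<bullet> (y - x) / s)" and "m \<le> psi_density x 0 y"
        using in_B[of y] s_pos y0 by (auto simp: m_def field_simps)
      then show ?thesis
        using True \<open>m > 0\<close> by (subst psi_density_eq_exp_inner) (simp add: C_def mult_mono)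
    qed (use psi_density_pos[of x w y] in simp)
    moreover have "integrable lborel (indicat_real B)"
      unfolding B_def by (rule integrable_real_indicator[OF _ emeasure_lborel_ball_finite]) simp
    ultimately have "(\<integral>y. C * indicator B y \<partial>lborel) \<le> Psi x w"
      unfolding Psi_eq_integral using integrable_psi_density by (intro integral_mono) auto
    moreover have "measure lborel B = V"
      by (simp add: B_def V_def content_ball)
    ultimately show ?thesis
      by (simp add: C_def mult_ac)
  qed
  then show ?thesis
    using that \<open>m > 0\<close> \<open>V > 0\<close> by (metis mult_pos_pos)
qed

lemma Psi_has_minimizer:
  obtains z where "\<And>w. Psi x z \<le> Psi x w"
proof -
  obtain c where "c > 0" and c: "\<And>w. w \<noteq> 0 \<Longrightarrow> c * exp (norm w / (2 * s)) \<le> Psi x w"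
    using Psi_ge_exp_norm by blast
  define R where "R = 2 * s * \<bar>ln (Psi x x / c)\<bar>"
  have "Psi x x \<le> Psi x w" if "R < norm w" for w
  proof -
    have "0 \<le> R"
      using s_pos by (simp add: R_def)
    then have "w \<noteq> 0"
      using that by auto
    have "Psi x x / c \<le> exp \<bar>ln (Psi x x / c)\<bar>"
      using Psi_pos[of x x] \<open>c > 0\<close> by (metis abs_ge_self divide_pos_pos exp_le_cancel_iff exp_ln)
    also have "\<dots> < exp (norm w / (2 * s))"
      using that s_pos by (simp add: R_def field_simps)
    finally have "Psi x x < c * exp (norm w / (2 * s))"
      using \<open>c > 0\<close> by (simp add: field_simps)
    also have "\<dots> \<le> Psi x w"
      using c \<open>w \<noteq> 0\<close> .
    finally show ?thesis
      by simp
  qed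
  then show ?thesis
    using continuous_attains_inf_coercive[OF Psi_continuous] that by blast
qed

lemma zprox_surj: "surj (zprox lam del f)"
proof -
  have "x \<in> range (zprox lam del f)" for x
  proof -
    obtain z where "\<And>w. Psi x z \<le> Psi x w"
      using Psi_has_minimizer[of x] by blast
    then show ?thesis
      using zprox_eq_iff_minimizer[of z x] by (metis rangeI)
  qed
  then show ?thesis
    by blast
qed

text \<open>\<open>H_fun\<close> evaluates at the preimage picked by \<open>inv\<close>; since every preimage of \<open>x\<close>
  minimises \<open>Psi x\<close>, surjectivity of \<open>zprox\<close> is all that is needed.\<close>

lemma H_fun_eq_neg_ln_Psi:
  assumes "zprox lam del f z = x"
  shows "H_fun lam del f x = - ln (Psi x z)"
proof -
  define z' where "z' = inv (zprox lam del f) x"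
  have "zprox lam del f z' = x"
    unfolding z'_def using zprox_surj by (rule surj_f_inv_f)
  then have "Psi x z' = Psi x z"
    using assms by (simp add: zprox_eq_iff_minimizer order_antisym)
  moreover have "H_fun lam del f x = - (norm (z' - x))\<^sup>2 / (2 * s) - ln (Z z')"
    using del_pos by (simp add: H_fun_def Let_def soft_moreau_def Z_def gibbs_def[abs_def] z'_def s_def
        mult.assoc)
  then have "H_fun lam del f x = - ln (Psi x z')"
    using Z_pos[of z'] by (simp add: Psi_def ln_mult)
  ultimately show ?thesis
    by simp
qed

lemma neg_ln_Psi_le_H_fun: "- ln (Psi x w) \<le> H_fun lam del f x"
proof -
  obtain z where z: "zprox lam del f z = x"
    using zprox_surj by (metis surjD)
  then have "Psi x z \<le> Psi x w"
    using zprox_eq_iff_minimizer by blast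
  then show ?thesis
    unfolding H_fun_eq_neg_ln_Psi[OF z] using Psi_pos by simp
qed

lemma H_fun_zprox_le:
  "H_fun lam del f (zprox lam del f x)
     \<le> H_fun lam del f x - (1 / (2 * lam * del)) * (norm (zprox lam del f x - x))\<^sup>2"
proof -
  have "H_fun lam del f (zprox lam del f x) = - ln (Psi (zprox lam del f x) x)"
    by (rule H_fun_eq_neg_ln_Psi) simp
  also have "\<dots> = - ln (Psi x x) - (norm (zprox lam del f x - x))\<^sup>2 / (2 * s)"
    using Z_pos[of x] by (simp add: Psi_def ln_mult norm_minus_commute)
  also have "\<dots> \<le> H_fun lam del f x - (1 / (2 * lam * del)) * (norm (zprox lam del f x - x))\<^sup>2"
    using neg_ln_Psi_le_H_fun[of x x] by (simp add: s_def)
  finally show ?thesis .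
qed

lemma H_fun_bounded_below: "- ln (K * integral\<^sup>L lborel (\<lambda>y. exp (- f y / del))) \<le> H_fun lam del f x"
proof -
  have "ln (Psi x x) \<le> ln (K * integral\<^sup>L lborel (\<lambda>y. exp (- f y / del)))"
    using Z_pos[of x] Z_le[of x] by (simp add: Psi_def)
  then show ?thesis
    using neg_ln_Psi_le_H_fun[of x x] by linarith
qed

end

theorem proposition2:
  fixes f :: "'a::euclidean_space \<Rightarrow> real"
    and lam del :: real
    and xs :: "nat \<Rightarrow> 'a"
  assumes lam_pos: "lam > 0" and del_pos: "del > 0"
    and A1_cont: "continuous_on UNIV f"
    and A1_min: "\<exists>x0. \<forall>y. f x0 \<le> f y"
    and A2: "(\<integral>\<^sup>+ y. ennreal (exp (- f y / del)) \<partial>lborel) < \<infinity>"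
    and zoppa: "\<And>k. xs (Suc k) = zprox lam del f (xs k)"
  shows "(\<forall>k. H_fun lam del f (xs (Suc k))
              \<le> H_fun lam del f (xs k) - (1 / (2 * lam * del)) * (norm (xs (Suc k) - xs k))\<^sup>2)
         \<and> (\<lambda>k. norm (xs (Suc k) - xs k)) \<longlonglongrightarrow> 0"
proof -
  interpret zprox_setting f lam del
    using lam_pos del_pos A1_cont A2 by unfold_locales
  have decrease: "H_fun lam del f (xs (Suc k))
      \<le> H_fun lam del f (xs k) - (1 / (2 * lam * del)) * (norm (xs (Suc k) - xs k))\<^sup>2" for k
    unfolding zoppa by (rule H_fun_zprox_le)
  moreover have "(\<lambda>k. norm (xs (Suc k) - xs k)) \<longlonglongrightarrow> 0"
    using sufficient_decrease_tendsto_zero[where H = "\<lambda>k. H_fun lam del f (xs k)"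
        and d = "\<lambda>k. norm (xs (Suc k) - xs k)", OF _ decrease H_fun_bounded_below]
      lam_pos del_pos by simp
  ultimately show ?thesis
    by blast
qed

end
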